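(* Let $A$ be a ring and let $J$ be either the prime radical, the upper nilradical, or the Jacobson radical of $A$. If $\varphi: A \to A$ is a surjective ring endomorphism and $A/J$ is Hopfian, then $\ker\varphi \subseteq J$.
   Context: The prime radical of $A$ is the intersection of all prime ideals of $A$; the upper nilradical is the largest nil two-sided ideal of $A$; the Jacobson radical is the intersection of all maximal left ideals of $A$. A ring $R$ is \emph{Hopfian} if $R$ is not isomorphic (as a ring) to $R/I$ for any nonzero two-sided ideal $I \triangleleft R$; equivalently, every surjective ring endomorphism of $R$ is injective. *)

theory Defs
  imports "HOL-Algebra.QuotRing"
begin

text \<open>Rings are associative unital (not necessarily commutative) rings in the
sense of the HOL-Algebra locale ring; ideal denotes a two-sided ideal.\<close>

definition left_ideal :: "('a, 'b) ring_scheme \<Rightarrow> 'a set \<Rightarrow> bool" where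
  "left_ideal R L \<longleftrightarrow> additive_subgroup L R \<and>
     (\<forall>r \<in> carrier R. \<forall>x \<in> L. r \<otimes>\<^bsub>R\<^esub> x \<in> L)"

definition maximal_left_ideal :: "('a, 'b) ring_scheme \<Rightarrow> 'a set \<Rightarrow> bool" where
  "maximal_left_ideal R M \<longleftrightarrow> left_ideal R M \<and> M \<noteq> carrier R \<and>
     (\<forall>L. left_ideal R L \<and> M \<subseteq> L \<and> L \<noteq> carrier R \<longrightarrow> L = M)"

text \<open>Prime ideal of a (possibly noncommutative) ring: a proper two-sided ideal P
such that for two-sided ideals I, J, IJ \<subseteq> P implies I \<subseteq> P or J \<subseteq> P.
(IJ \<subseteq> P is written elementwise, which is the same since P is additively closed.)\<close>

definition nc_prime_ideal :: "('a, 'b) ring_scheme \<Rightarrow> 'a set \<Rightarrow> bool" where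
  "nc_prime_ideal R P \<longleftrightarrow> ideal P R \<and> P \<noteq> carrier R \<and>
     (\<forall>I J. ideal I R \<and> ideal J R \<and> (\<forall>a \<in> I. \<forall>b \<in> J. a \<otimes>\<^bsub>R\<^esub> b \<in> P)
        \<longrightarrow> I \<subseteq> P \<or> J \<subseteq> P)"

definition prime_radical :: "('a, 'b) ring_scheme \<Rightarrow> 'a set" where
  "prime_radical R = {x \<in> carrier R. \<forall>P. nc_prime_ideal R P \<longrightarrow> x \<in> P}"

definition jacobson_radical :: "('a, 'b) ring_scheme \<Rightarrow> 'a set" where
  "jacobson_radical R = {x \<in> carrier R. \<forall>M. maximal_left_ideal R M \<longrightarrow> x \<in> M}"

definition nil_set :: "('a, 'b) ring_scheme \<Rightarrow> 'a set \<Rightarrow> bool" where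
  "nil_set R I \<longleftrightarrow> (\<forall>x \<in> I. \<exists>n::nat. x [^]\<^bsub>R\<^esub> n = \<zero>\<^bsub>R\<^esub>)"

definition is_upper_nilradical :: "('a, 'b) ring_scheme \<Rightarrow> 'a set \<Rightarrow> bool" where
  "is_upper_nilradical R J \<longleftrightarrow> ideal J R \<and> nil_set R J \<and>
     (\<forall>I. ideal I R \<and> nil_set R I \<longrightarrow> I \<subseteq> J)"

definition hopfian :: "('a, 'b) ring_scheme \<Rightarrow> bool" where
  "hopfian R \<longleftrightarrow> (\<forall>f \<in> ring_hom R R. f ` carrier R = carrier R \<longrightarrow> inj_on f (carrier R))"

end

theory Submission
  imports Defs
begin

text \<open>A surjective endomorphism \<open>\<phi>\<close> of \<open>A\<close> maps each of the three radicals \<open>J\<close> into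
itself. Prime ideals and maximal left ideals pull back along a surjective homomorphism to ideals of
the same kind, and the prime and the Jacobson radical are intersections of such ideals; the image
of a nil ideal is a nil ideal, so it lies in the upper nilradical. Hence \<open>J +> x \<mapsto> J +> \<phi> x\<close>
is a well-defined surjective endomorphism of \<open>A/J\<close>, injective because \<open>A/J\<close> is Hopfian. It sends
the coset of an element of \<open>ker \<phi>\<close> to the zero coset, so that element lies in \<open>J\<close>.\<close>

lemma left_idealD:
  fixes R (structure)
  assumes "left_ideal R L"
  shows left_ideal_subset: "L \<subseteq> carrier R"
    and left_ideal_zero: "\<zero> \<in> L"
    and left_ideal_add: "\<And>a b. a \<in> L \<Longrightarrow> b \<in> L \<Longrightarrow> a \<oplus> b \<in> L"
    and left_ideal_a_inv: "\<And>a. a \<in> L \<Longrightarrow> \<ominus> a \<in> L"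
    and left_ideal_mult: "\<And>r a. r \<in> carrier R \<Longrightarrow> a \<in> L \<Longrightarrow> r \<otimes> a \<in> L"
proof -
  have sub: "additive_subgroup L R" and mult: "\<forall>r \<in> carrier R. \<forall>x \<in> L. r \<otimes> x \<in> L"
    using assms unfolding left_ideal_def by simp_all
  interpret additive_subgroup L R by (fact sub)
  show "L \<subseteq> carrier R" "\<zero> \<in> L" by (fact a_subset zero_closed)+
  show "\<And>a b. a \<in> L \<Longrightarrow> b \<in> L \<Longrightarrow> a \<oplus> b \<in> L" "\<And>a. a \<in> L \<Longrightarrow> \<ominus> a \<in> L"
    by (fact a_closed a_inv_closed)+
  show "\<And>r a. r \<in> carrier R \<Longrightarrow> a \<in> L \<Longrightarrow> r \<otimes> a \<in> L" using mult by blast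
qed

lemma (in ring) left_idealI:
  assumes "L \<subseteq> carrier R" "\<zero> \<in> L"
    and "\<And>a b. a \<in> L \<Longrightarrow> b \<in> L \<Longrightarrow> a \<oplus> b \<in> L"
    and "\<And>a. a \<in> L \<Longrightarrow> \<ominus> a \<in> L"
    and "\<And>r a. r \<in> carrier R \<Longrightarrow> a \<in> L \<Longrightarrow> r \<otimes> a \<in> L"
  shows "left_ideal R L"
proof -
  have "subgroup L (add_monoid R)"
    using assms(1-4) by (intro subgroup.intro) (auto simp: a_inv_def[symmetric])
  then show ?thesis
    unfolding left_ideal_def using assms(5) additive_subgroupI by blast
qed

lemma (in ring) left_ideal_one_imp_carrier:
  assumes "left_ideal R L" and "\<one> \<in> L"
  shows "L = carrier R"
  using left_idealD[OF assms(1)] assms(2) by (metis r_one subsetI subset_antisym)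

lemma (in ring) left_ideal_Inter:
  assumes "\<And>L. Q L \<Longrightarrow> left_ideal R L"
  shows "left_ideal R {x \<in> carrier R. \<forall>L. Q L \<longrightarrow> x \<in> L}"
  by (rule left_idealI) (auto intro: left_idealD[OF assms])

lemma (in ring) left_ideal_colon:
  assumes M: "left_ideal R M" and r: "r \<in> carrier R"
  shows "left_ideal R {a \<in> carrier R. a \<otimes> r \<in> M}" (is "left_ideal R ?Q")
proof (rule left_idealI)
  fix a b assume "a \<in> ?Q" "b \<in> ?Q"
  then show "a \<oplus> b \<in> ?Q" using r left_ideal_add[OF M] by (simp add: l_distr)
next
  fix a assume "a \<in> ?Q"
  then show "\<ominus> a \<in> ?Q" using r left_ideal_a_inv[OF M] by (simp add: l_minus)
next
  fix s a assume "s \<in> carrier R" "a \<in> ?Q"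
  then show "s \<otimes> a \<in> ?Q" using r left_ideal_mult[OF M] by (simp add: m_assoc)
qed (use r left_ideal_zero[OF M] in auto)

lemma (in ring) left_ideal_mult_add:
  assumes L: "left_ideal R L" and M: "left_ideal R M" and r: "r \<in> carrier R"
  shows "left_ideal R {x. \<exists>a \<in> L. \<exists>m \<in> M. x = a \<otimes> r \<oplus> m}" (is "left_ideal R ?N")
proof -
  have carr: "a \<in> carrier R" "m \<in> carrier R" if "a \<in> L" "m \<in> M" for a m
    using that left_ideal_subset[OF L] left_ideal_subset[OF M] by blast+
  show ?thesis
  proof (rule left_idealI)
    show "?N \<subseteq> carrier R" using r carr by blast
    have "\<zero> = \<zero> \<otimes> r \<oplus> \<zero>" using r by simp
    then show "\<zero> \<in> ?N" using left_ideal_zero[OF L] left_ideal_zero[OF M] by blast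
  next
    fix x y assume "x \<in> ?N" "y \<in> ?N"
    then obtain a m b n
      where "a \<in> L" "m \<in> M" "x = a \<otimes> r \<oplus> m" "b \<in> L" "n \<in> M" "y = b \<otimes> r \<oplus> n"
      by blast
    moreover from this have "x \<oplus> y = (a \<oplus> b) \<otimes> r \<oplus> (m \<oplus> n)"
      using r carr by (simp add: l_distr a_ac)
    ultimately show "x \<oplus> y \<in> ?N" using left_ideal_add[OF L] left_ideal_add[OF M] by blast
  next
    fix x assume "x \<in> ?N"
    then obtain a m where "a \<in> L" "m \<in> M" "x = a \<otimes> r \<oplus> m" by blast
    moreover from this have "\<ominus> x = (\<ominus> a) \<otimes> r \<oplus> \<ominus> m"
      using r carr by (simp add: l_minus minus_add)
    ultimately show "\<ominus> x \<in> ?N" using left_ideal_a_inv[OF L] left_ideal_a_inv[OF M] by blast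
  next
    fix s x assume s: "s \<in> carrier R" and "x \<in> ?N"
    then obtain a m where "a \<in> L" "m \<in> M" "x = a \<otimes> r \<oplus> m" by blast
    moreover from this have "s \<otimes> x = (s \<otimes> a) \<otimes> r \<oplus> s \<otimes> m"
      using r s carr by (simp add: r_distr m_assoc)
    ultimately show "s \<otimes> x \<in> ?N" using left_ideal_mult[OF L] left_ideal_mult[OF M] s by blast
  qed
qed

lemma (in ring) ideal_of_left_ideal_right_closed:
  assumes "left_ideal R I" and "\<And>a x. a \<in> I \<Longrightarrow> x \<in> carrier R \<Longrightarrow> a \<otimes> x \<in> I"
  shows "ideal I R"
  using assms left_ideal_mult[OF assms(1)] additive_subgroup.a_subgroup
  by (intro idealI[OF ring_axioms]) (auto simp: left_ideal_def)

lemma maximal_left_idealD: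
  fixes R (structure)
  assumes "maximal_left_ideal R M"
  shows "left_ideal R M" and "M \<noteq> carrier R"
    and "\<And>L. left_ideal R L \<Longrightarrow> M \<subseteq> L \<Longrightarrow> L = M \<or> L = carrier R"
  using assms unfolding maximal_left_ideal_def by blast+

lemma (in ring) maximal_left_ideal_mult_add_eq:
  assumes M: "maximal_left_ideal R M" and L: "left_ideal R L" and L_proper: "L \<noteq> carrier R"
    and r: "r \<in> carrier R" and colon_subset: "{a \<in> carrier R. a \<otimes> r \<in> M} \<subseteq> L"
  shows "{x. \<exists>a \<in> L. \<exists>m \<in> M. x = a \<otimes> r \<oplus> m} = M" (is "?N = M")
proof -
  note M_left = maximal_left_idealD(1)[OF M]
  have "M \<subseteq> ?N"
  proof
    fix m assume "m \<in> M"
    moreover have "m = \<zero> \<otimes> r \<oplus> m" using \<open>m \<in> M\<close> left_ideal_subset[OF M_left] r by auto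
    ultimately show "m \<in> ?N" using left_ideal_zero[OF L] by blast
  qed
  moreover have "?N \<noteq> carrier R"
  proof
    assume "?N = carrier R"
    then obtain a m where a: "a \<in> L" and m: "m \<in> M" and r_eq: "r = a \<otimes> r \<oplus> m"
      using r by blast
    have carr: "a \<in> carrier R" "m \<in> carrier R"
      using a m left_ideal_subset[OF L] left_ideal_subset[OF M_left] by blast+
    \<comment> \<open>\<open>r = a r + m\<close> puts \<open>\<one> \<ominus> a\<close> into the colon ideal \<open>(M : r) \<subseteq> L\<close>, hence \<open>\<one> \<in> L\<close>\<close>
    have "(\<one> \<ominus> a) \<otimes> r = r \<ominus> a \<otimes> r" using carr r by (simp add: l_minus l_distr a_minus_def)
    also have "\<dots> = (a \<otimes> r \<oplus> m) \<ominus> a \<otimes> r"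
      using r_eq by (rule arg_cong[of _ _ "\<lambda>x. x \<ominus> a \<otimes> r"])
    also have "\<dots> = m" using carr r by algebra
    finally have "\<one> \<ominus> a \<in> L" using colon_subset m carr by auto
    then have "(\<one> \<ominus> a) \<oplus> a \<in> L" using a left_ideal_add[OF L] by blast
    moreover have "(\<one> \<ominus> a) \<oplus> a = \<one>" using carr by algebra
    ultimately show False using left_ideal_one_imp_carrier[OF L] L_proper by simp
  qed
  ultimately show ?thesis
    using maximal_left_idealD(3)[OF M left_ideal_mult_add[OF L M_left r]] by blast
qed

lemma (in ring) maximal_left_ideal_colon:
  assumes M: "maximal_left_ideal R M" and r: "r \<in> carrier R" "r \<notin> M"
  shows "maximal_left_ideal R {a \<in> carrier R. a \<otimes> r \<in> M}" (is "maximal_left_ideal R ?Q")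
proof -
  note M_left = maximal_left_idealD(1)[OF M]
  have "L \<subseteq> ?Q" if L: "left_ideal R L" and "?Q \<subseteq> L" and "L \<noteq> carrier R" for L
  proof
    fix l assume l: "l \<in> L"
    then have l_carr: "l \<in> carrier R" using left_ideal_subset[OF L] by blast
    have "l \<otimes> r = l \<otimes> r \<oplus> \<zero>" using l_carr r(1) by simp
    then have "l \<otimes> r \<in> {x. \<exists>a \<in> L. \<exists>m \<in> M. x = a \<otimes> r \<oplus> m}"
      using l left_ideal_zero[OF M_left] by blast
    then show "l \<in> ?Q"
      using maximal_left_ideal_mult_add_eq[OF M that(1,3) r(1) that(2)] l_carr by blast
  qed
  moreover have "\<one> \<notin> ?Q" using r by simp
  moreover have "left_ideal R ?Q" by (rule left_ideal_colon[OF M_left r(1)])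
  ultimately show ?thesis unfolding maximal_left_ideal_def using one_closed by blast
qed

lemma (in ring) jacobson_radical_ideal: "ideal (jacobson_radical R) R"
proof (rule ideal_of_left_ideal_right_closed)
  show "left_ideal R (jacobson_radical R)"
    unfolding jacobson_radical_def by (rule left_ideal_Inter) (rule maximal_left_idealD(1))
  fix a x assume a: "a \<in> jacobson_radical R" and x: "x \<in> carrier R"
  have "a \<otimes> x \<in> M" if M: "maximal_left_ideal R M" for M
  proof (cases "x \<in> M")
    case True
    then show ?thesis using a left_ideal_mult[OF maximal_left_idealD(1)[OF M]]
      unfolding jacobson_radical_def by blast
  next
    case False
    then show ?thesis using a maximal_left_ideal_colon[OF M x False]
      unfolding jacobson_radical_def by blast
  qed
  then show "a \<otimes> x \<in> jacobson_radical R"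
    using a x unfolding jacobson_radical_def by blast
qed

lemma (in ring) prime_radical_ideal: "ideal (prime_radical R) R"
proof -
  have "prime_radical R = \<Inter> (insert (carrier R) {P. nc_prime_ideal R P})"
    unfolding prime_radical_def by blast
  then show ?thesis
    using i_Intersect[of "insert (carrier R) {P. nc_prime_ideal R P}"] oneideal
    unfolding nc_prime_ideal_def by auto
qed

lemma image_Inter_subset_Inter:
  assumes "f ` A \<subseteq> B" and "\<And>P. Q' P \<Longrightarrow> Q {x \<in> A. f x \<in> P}"
  shows "f ` {x \<in> A. \<forall>P. Q P \<longrightarrow> x \<in> P} \<subseteq> {y \<in> B. \<forall>P. Q' P \<longrightarrow> y \<in> P}"
  using assms by blast

context ring_hom_ring
begin

lemma left_ideal_vimage:
  assumes L: "left_ideal S L"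
  shows "left_ideal R {x \<in> carrier R. h x \<in> L}"
proof (rule R.left_idealI)
  show "\<zero> \<in> {x \<in> carrier R. h x \<in> L}" using left_ideal_zero[OF L] by simp
  fix a b assume "a \<in> {x \<in> carrier R. h x \<in> L}" "b \<in> {x \<in> carrier R. h x \<in> L}"
  then show "a \<oplus> b \<in> {x \<in> carrier R. h x \<in> L}" using left_ideal_add[OF L] by simp
next
  fix a assume "a \<in> {x \<in> carrier R. h x \<in> L}"
  then show "\<ominus> a \<in> {x \<in> carrier R. h x \<in> L}" using left_ideal_a_inv[OF L] by simp
next
  fix r a assume "r \<in> carrier R" "a \<in> {x \<in> carrier R. h x \<in> L}"
  then show "r \<otimes> a \<in> {x \<in> carrier R. h x \<in> L}" using left_ideal_mult[OF L] by simp
qed auto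

lemma left_ideal_image:
  assumes surj: "h ` carrier R = carrier S" and L: "left_ideal R L"
  shows "left_ideal S (h ` L)"
proof -
  have L_carr: "\<And>x. x \<in> L \<Longrightarrow> x \<in> carrier R" using left_ideal_subset[OF L] by blast
  show ?thesis
  proof (rule S.left_idealI)
    show "h ` L \<subseteq> carrier S" using L_carr by auto
    show "\<zero>\<^bsub>S\<^esub> \<in> h ` L" using left_ideal_zero[OF L] hom_zero by force
    fix a b assume "a \<in> h ` L" "b \<in> h ` L"
    then obtain x y where "x \<in> L" "y \<in> L" "a = h x" "b = h y" by blast
    moreover from this have "a \<oplus>\<^bsub>S\<^esub> b = h (x \<oplus> y)" using L_carr by auto
    ultimately show "a \<oplus>\<^bsub>S\<^esub> b \<in> h ` L" using left_ideal_add[OF L] by blast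
  next
    fix a assume "a \<in> h ` L"
    then obtain x where "x \<in> L" "a = h x" by blast
    moreover from this have "\<ominus>\<^bsub>S\<^esub> a = h (\<ominus> x)" using L_carr by auto
    ultimately show "\<ominus>\<^bsub>S\<^esub> a \<in> h ` L" using left_ideal_a_inv[OF L] by blast
  next
    fix s a assume "s \<in> carrier S" "a \<in> h ` L"
    then obtain y x where "y \<in> carrier R" "s = h y" "x \<in> L" "a = h x" using surj by blast
    moreover from this have "s \<otimes>\<^bsub>S\<^esub> a = h (y \<otimes> x)" using L_carr by auto
    ultimately show "s \<otimes>\<^bsub>S\<^esub> a \<in> h ` L" using left_ideal_mult[OF L] by blast
  qed
qed

lemma ideal_image:
  assumes surj: "h ` carrier R = carrier S" and I: "ideal I R"
  shows "ideal (h ` I) S"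
proof (rule idealI[OF S.ring_axioms])
  show "subgroup (h ` I) (add_monoid S)"
    using img_is_add_subgroup additive_subgroup.a_subgroup ideal.axioms(1)[OF I] by blast
  fix a s assume "a \<in> h ` I" "s \<in> carrier S"
  then obtain x y where xy: "x \<in> I" "a = h x" "y \<in> carrier R" "s = h y" using surj by blast
  then have x: "x \<in> carrier R" using ideal.Icarr[OF I] by blast
  show "s \<otimes>\<^bsub>S\<^esub> a \<in> h ` I"
    using xy x ideal.I_l_closed[OF I] by (metis hom_mult image_eqI)
  show "a \<otimes>\<^bsub>S\<^esub> s \<in> h ` I"
    using xy x ideal.I_r_closed[OF I] by (metis hom_mult image_eqI)
qed

lemma maximal_left_ideal_vimage:
  assumes surj: "h ` carrier R = carrier S" and M: "maximal_left_ideal S M"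
  shows "maximal_left_ideal R {x \<in> carrier R. h x \<in> M}"
proof -
  define Q where "Q = {x \<in> carrier R. h x \<in> M}"
  note M_left = maximal_left_idealD(1)[OF M]
  have "left_ideal R Q" unfolding Q_def by (rule left_ideal_vimage[OF M_left])
  moreover have "\<one> \<notin> Q"
    using maximal_left_idealD(2)[OF M] S.left_ideal_one_imp_carrier[OF M_left]
    unfolding Q_def by auto
  moreover have "L = Q" if L: "left_ideal R L" and "Q \<subseteq> L" and L_proper: "L \<noteq> carrier R" for L
  proof -
    have "M \<subseteq> h ` L"
    proof
      fix m assume "m \<in> M"
      moreover obtain x where "x \<in> carrier R" "m = h x"
        using \<open>m \<in> M\<close> left_ideal_subset[OF M_left] surj by blast
      ultimately show "m \<in> h ` L" using \<open>Q \<subseteq> L\<close> unfolding Q_def by blast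
    qed
    moreover have "h ` L \<noteq> carrier S"
    proof
      assume "h ` L = carrier S"
      then obtain l where l: "l \<in> L" "h l = \<one>\<^bsub>S\<^esub>" by (metis S.one_closed imageE)
      have l_carr: "l \<in> carrier R" using l(1) left_ideal_subset[OF L] by blast
      have "h (\<one> \<ominus> l) = \<zero>\<^bsub>S\<^esub>" using l l_carr by (simp add: a_minus_def S.r_neg)
      then have "\<one> \<ominus> l \<in> L"
        using \<open>Q \<subseteq> L\<close> l_carr left_ideal_zero[OF M_left] unfolding Q_def by auto
      then have "(\<one> \<ominus> l) \<oplus> l \<in> L" using l(1) left_ideal_add[OF L] by blast
      moreover have "(\<one> \<ominus> l) \<oplus> l = \<one>" using l_carr by algebra
      ultimately show False using R.left_ideal_one_imp_carrier[OF L] L_proper by simp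
    qed
    ultimately have "h ` L = M"
      using maximal_left_idealD(3)[OF M left_ideal_image[OF surj L]] by blast
    then show "L = Q" using \<open>Q \<subseteq> L\<close> left_ideal_subset[OF L] unfolding Q_def by blast
  qed
  ultimately show ?thesis unfolding maximal_left_ideal_def Q_def by blast
qed

lemma nc_prime_ideal_vimage:
  assumes surj: "h ` carrier R = carrier S" and P: "nc_prime_ideal S P"
  shows "nc_prime_ideal R {x \<in> carrier R. h x \<in> P}"
proof -
  define Q where "Q = {x \<in> carrier R. h x \<in> P}"
  have P_ideal: "ideal P S" and P_proper: "P \<noteq> carrier S"
    using P unfolding nc_prime_ideal_def by auto
  have "I \<subseteq> Q \<or> K \<subseteq> Q"
    if I: "ideal I R" and K: "ideal K R" and IK: "\<forall>a \<in> I. \<forall>b \<in> K. a \<otimes> b \<in> Q" for I K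
  proof -
    have "\<forall>a \<in> h ` I. \<forall>b \<in> h ` K. a \<otimes>\<^bsub>S\<^esub> b \<in> P"
      using IK ideal.Icarr[OF I] ideal.Icarr[OF K] unfolding Q_def by auto
    then have "h ` I \<subseteq> P \<or> h ` K \<subseteq> P"
      using P ideal_image[OF surj I] ideal_image[OF surj K] unfolding nc_prime_ideal_def by blast
    then show ?thesis using ideal.Icarr[OF I] ideal.Icarr[OF K] unfolding Q_def by blast
  qed
  moreover have "ideal Q R" unfolding Q_def by (rule ideal_vimage[OF P_ideal])
  moreover have "\<one> \<notin> Q" using ideal.one_imp_carrier[OF P_ideal] P_proper unfolding Q_def by auto
  ultimately show ?thesis unfolding nc_prime_ideal_def Q_def by blast
qed

lemma nil_set_image:
  assumes "I \<subseteq> carrier R" and "nil_set R I"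
  shows "nil_set S (h ` I)"
  unfolding nil_set_def
proof
  fix y assume "y \<in> h ` I"
  then obtain x n where "x \<in> I" "y = h x" "x [^] (n::nat) = \<zero>"
    using assms(2) unfolding nil_set_def by blast
  moreover have "x \<in> carrier R" using \<open>x \<in> I\<close> assms(1) by blast
  ultimately have "y [^]\<^bsub>S\<^esub> n = \<zero>\<^bsub>S\<^esub>" by (simp flip: hom_nat_pow)
  then show "\<exists>n::nat. y [^]\<^bsub>S\<^esub> n = \<zero>\<^bsub>S\<^esub>" ..
qed

lemma prime_radical_image:
  assumes "h ` carrier R = carrier S"
  shows "h ` prime_radical R \<subseteq> prime_radical S"
  unfolding prime_radical_def
  by (rule image_Inter_subset_Inter) (auto intro: nc_prime_ideal_vimage[OF assms])

lemma jacobson_radical_image: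
  assumes "h ` carrier R = carrier S"
  shows "h ` jacobson_radical R \<subseteq> jacobson_radical S"
  unfolding jacobson_radical_def
  by (rule image_Inter_subset_Inter) (auto intro: maximal_left_ideal_vimage[OF assms])

lemma upper_nilradical_image:
  assumes "h ` carrier R = carrier S"
    and "is_upper_nilradical R J" and "is_upper_nilradical S K"
  shows "h ` J \<subseteq> K"
  using assms ideal_image[OF assms(1)] nil_set_image ideal.Icarr
  unfolding is_upper_nilradical_def by (meson subsetI)

end

definition induced_hom :: "('c, 'd) ring_scheme \<Rightarrow> 'c set \<Rightarrow> ('a \<Rightarrow> 'c) \<Rightarrow> 'a set \<Rightarrow> 'c set"
  where "induced_hom S K h X = the_elem ((\<lambda>x. K +>\<^bsub>S\<^esub> h x) ` X)"

lemma carrier_FactRing: "carrier (R Quot I) = (\<lambda>x. I +>\<^bsub>R\<^esub> x) ` carrier R"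
  unfolding FactRing_def A_RCOSETS_def' by auto

context ring_hom_ring
begin

lemma induced_hom_rcos:
  assumes I: "ideal I R" and K: "ideal K S" and IK: "h ` I \<subseteq> K" and x: "x \<in> carrier R"
  shows "induced_hom S K h (I +> x) = K +>\<^bsub>S\<^esub> h x"
proof -
  interpret I: ideal I R by (fact I)
  have "K +>\<^bsub>S\<^esub> h y = K +>\<^bsub>S\<^esub> h x" if "y \<in> I +> x" for y
  proof -
    have y: "y \<in> carrier R" using that x I.a_elemrcos_carrier by blast
    have "y \<ominus> x \<in> I"
      using that R.quotient_eq_iff_same_a_r_cos[OF I y x] I.a_repr_independence' x by blast
    then have "h y \<ominus>\<^bsub>S\<^esub> h x \<in> K" using IK x y by (auto simp: a_minus_def)
    then show ?thesis using S.quotient_eq_iff_same_a_r_cos[OF K] x y by simp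
  qed
  moreover have "x \<in> I +> x" using I.a_rcos_self[OF x] .
  ultimately have "(\<lambda>y. K +>\<^bsub>S\<^esub> h y) ` (I +> x) = {K +>\<^bsub>S\<^esub> h x}" by blast
  then show ?thesis unfolding induced_hom_def by simp
qed

lemma induced_hom_ring_hom:
  assumes I: "ideal I R" and K: "ideal K S" and IK: "h ` I \<subseteq> K"
  shows "induced_hom S K h \<in> ring_hom (R Quot I) (S Quot K)"
proof (rule ring_hom_memI)
  note rcos = induced_hom_rcos[OF I K IK]
  note \<pi>R = ideal.rcos_ring_hom[OF I] and \<pi>S = ideal.rcos_ring_hom[OF K]
  fix X Y assume "X \<in> carrier (R Quot I)" "Y \<in> carrier (R Quot I)"
  then obtain x y where x: "x \<in> carrier R" "X = I +> x" and y: "y \<in> carrier R" "Y = I +> y"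
    unfolding carrier_FactRing by blast
  show "induced_hom S K h X \<in> carrier (S Quot K)"
    using x rcos unfolding carrier_FactRing by auto
  show "induced_hom S K h (X \<otimes>\<^bsub>R Quot I\<^esub> Y) = induced_hom S K h X \<otimes>\<^bsub>S Quot K\<^esub> induced_hom S K h Y"
    using x y rcos ring_hom_mult[OF \<pi>R x(1) y(1), symmetric]
      ring_hom_mult[OF \<pi>S, of "h x" "h y", symmetric] by simp
  show "induced_hom S K h (X \<oplus>\<^bsub>R Quot I\<^esub> Y) = induced_hom S K h X \<oplus>\<^bsub>S Quot K\<^esub> induced_hom S K h Y"
    using x y rcos ring_hom_add[OF \<pi>R x(1) y(1), symmetric]
      ring_hom_add[OF \<pi>S, of "h x" "h y", symmetric] by simp
next
  show "induced_hom S K h \<one>\<^bsub>R Quot I\<^esub> = \<one>\<^bsub>S Quot K\<^esub>"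
    using induced_hom_rcos[OF I K IK R.one_closed] ring_hom_one[OF ideal.rcos_ring_hom[OF I]]
      ring_hom_one[OF ideal.rcos_ring_hom[OF K]] by simp
qed

lemma induced_hom_surj:
  assumes I: "ideal I R" and K: "ideal K S" and IK: "h ` I \<subseteq> K"
    and surj: "h ` carrier R = carrier S"
  shows "induced_hom S K h ` carrier (R Quot I) = carrier (S Quot K)"
proof -
  have "induced_hom S K h ` carrier (R Quot I) = (\<lambda>x. K +>\<^bsub>S\<^esub> h x) ` carrier R"
    unfolding carrier_FactRing image_image using induced_hom_rcos[OF I K IK] by simp
  also have "\<dots> = carrier (S Quot K)"
    unfolding carrier_FactRing surj[symmetric] image_image ..
  finally show ?thesis .
qed

end

lemma (in ring) kernel_subset_of_hopfian_quotient:
  assumes I: "ideal I R" and h: "h \<in> ring_hom R R" and surj: "h ` carrier R = carrier R"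
    and II: "h ` I \<subseteq> I" and hopf: "hopfian (R Quot I)"
  shows "a_kernel R R h \<subseteq> I"
proof
  interpret ring_hom_ring R R h by (rule ring_hom_ringI2[OF ring_axioms ring_axioms h])
  fix x assume "x \<in> a_kernel R R h"
  then have x: "x \<in> carrier R" "h x = \<zero>" unfolding a_kernel_def' by simp_all
  have "inj_on (induced_hom R I h) (carrier (R Quot I))"
    using hopf induced_hom_ring_hom[OF I I II] induced_hom_surj[OF I I II surj]
    unfolding hopfian_def by blast
  moreover have "induced_hom R I h (I +> x) = induced_hom R I h (I +> \<zero>)"
    using induced_hom_rcos[OF I I II] x by simp
  moreover have "I +> x \<in> carrier (R Quot I)" "I +> \<zero> \<in> carrier (R Quot I)"
    unfolding carrier_FactRing using x(1) by auto
  ultimately have "I +> x = I +> \<zero>" by (blast dest: inj_onD)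
  then show "x \<in> I" using quotient_eq_iff_same_a_r_cos[OF I x(1) zero_closed] x(1)
    by (simp add: a_minus_def)
qed

theorem mainTheorem9:
  fixes A :: "('a, 'b) ring_scheme" and J :: "'a set" and \<phi> :: "'a \<Rightarrow> 'a"
  assumes "ring A"
    and "J = prime_radical A \<or> is_upper_nilradical A J \<or> J = jacobson_radical A"
    and "\<phi> \<in> ring_hom A A"
    and "\<phi> ` carrier A = carrier A"
    and "hopfian (A Quot J)"
  shows "a_kernel A A \<phi> \<subseteq> J"
proof -
  interpret ring A by fact
  interpret ring_hom_ring A A \<phi> by (rule ring_hom_ringI2[OF assms(1,1,3)])
  have "ideal J A \<and> \<phi> ` J \<subseteq> J"
    using assms(2)
  proof (elim disjE)
    assume "J = prime_radical A"
    then show ?thesis using prime_radical_ideal prime_radical_image[OF assms(4)] by simp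
  next
    assume "is_upper_nilradical A J"
    then show ?thesis
      using upper_nilradical_image[OF assms(4)] unfolding is_upper_nilradical_def by blast
  next
    assume "J = jacobson_radical A"
    then show ?thesis using jacobson_radical_ideal jacobson_radical_image[OF assms(4)] by simp
  qed
  then show ?thesis using kernel_subset_of_hopfian_quotient assms(3-5) by blast
qed

end
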